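(* Let $q\in\mathbb{C}$ with $0<|q|<1$ and $l,m,n,u\in\mathbb{N}$. Then \[ \sum_{k=0}^\infty\frac{q^{k^2+uk} (q)_{l+m+n-k}} {(q)_k (q)_{l-k}(q)_{m-k}(q)_{n-k} (q)_{u+k}} =\sum_{k=-\infty}^\infty\frac{(-1)^k q^{(3k^2-k)/2} (q)_{l+m}(q)_{l+n}(q)_{m+n}(q)_{u-1}} {(q)_{l-k}(q)_{m-k}(q)_{n-k}(q)_{u-k}(q)_{l+k}(q)_{m+k}(q)_{n+k}(q)_{u+k-1}}, \] and \[ \sum_{k=0}^\infty\frac{q^{k^2+(u-1)k} (q)_{l+m+n-k}} {(q)_k (q)_{l-k}(q)_{m-k}(q)_{n-k}(q)_{u+k}} =\sum_{k=-\infty}^\infty\frac{(-1)^k q^{(3k^2+k)/2} (q)_{l+m}(q)_{m+n}(q)_{l+n}(q)_{u-1}} {(q)_{l-k}(q)_{m-k}(q)_{n-k}(q)_{u-k}(q)_{l+k}(q)_{m+k}(q)_{n+k}(q)_{u+k-1}}. \]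
   Context: For an integer $n$, $(q)_n=(q;q)_n$ with $(q)_0=1$ and $(q)_n=(1-q)(1-q^2)\cdots(1-q^n)$ for $n\ge1$; for $n<0$ one uses the convention $1/(q)_n=0$. *)

theory Defs
  imports "HOL-Analysis.Analysis"
begin

definition qpoch :: "complex \<Rightarrow> nat \<Rightarrow> complex" where
  "qpoch q n = (\<Prod>i\<in>{1..n}. 1 - q ^ i)"

definition qpoch_inv :: "complex \<Rightarrow> int \<Rightarrow> complex" where
  "qpoch_inv q n = (if n < 0 then 0 else 1 / qpoch q (nat n))"

end

theory Submission
  imports Defs
begin

(* Both sides are finite sums. Write K_n(k) = 1/((q)_{n-k} (q)_{n+k}) (a Bailey kernel) and
   p(k) = (-1)^k q^{k(3k-1)/2}.  The q-Vandermonde identity linearizes products of kernels,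
   (q)_{n+N} K_n K_N = sum_j c_j K_j, and the finite q-binomial theorem at x = q^{-j} gives the
   orthogonality sum_k (-1)^k q^{k(k-1)/2} K_j(k) = [j = 0].  Since p(k) = (-1)^k q^{k(k-1)/2} q^{k^2}
   and q^{k^2} K_h is an explicit combination of the K_j, this evaluates sum_k p(k) K_h(k) = 1/(q)_h,
   and by linearization also the pentagonal sums of two and three kernels.  Writing the summand of the
   left-hand side as a double sum (q-Vandermonde twice) and evaluating the inner sums with the
   three-kernel formula turns the left-hand side into
   (q)_{l+m} (q)_{l+n} (q)_{m+n} (q)_v sum_k p(k) K_l K_m K_n K_v  with v = u resp. u - 1.
   The right-hand sides reduce to the same sums via 1/(q)_{x-1} = (1 - q^x)/(q)_x and p(k) q^k = p(-k). *)

lemma sum_atMost_eq_if_vanishing: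
  fixes f :: "nat \<Rightarrow> 'a::comm_monoid_add"
  assumes "\<And>k. c < k \<Longrightarrow> k \<le> max a b \<Longrightarrow> f k = 0"
    and "c \<le> a" and "c \<le> b"
  shows "(\<Sum>k\<le>a. f k) = (\<Sum>k\<le>b. f k)"
proof -
  have truncate: "(\<Sum>k\<le>x. f k) = (\<Sum>k\<le>c. f k)" if "c \<le> x" "x \<le> max a b" for x
  proof (rule sum.mono_neutral_right)
    show "\<forall>k\<in>{..x} - {..c}. f k = 0"
    proof
      fix k assume "k \<in> {..x} - {..c}"
      then have "c < k" "k \<le> max a b" using that by auto
      then show "f k = 0" by (rule assms(1))
    qed
  qed (use that in auto)
  have "(\<Sum>k\<le>a. f k) = (\<Sum>k\<le>c. f k)" "(\<Sum>k\<le>b. f k) = (\<Sum>k\<le>c. f k)"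
    by (rule truncate; use assms in auto)+
  then show ?thesis by (rule trans[OF _ sym])
qed

lemma sum_atMost_rev:
  fixes f :: "nat \<Rightarrow> 'a::comm_monoid_add"
  shows "(\<Sum>i\<le>n. f i) = (\<Sum>i\<le>n. f (n - i))"
  using sum.atLeastAtMost_rev[of f 0 n] by (simp add: atMost_atLeast0)

lemma Suc_choose_two: "Suc n choose 2 = (n choose 2) + n"
  by (simp add: numeral_2_eq_2)

lemma two_times_choose_two_int: "2 * int (n choose 2) = int n * int n - int n"
  by (induction n) (simp_all add: Suc_choose_two algebra_simps)

lemma sum_atMost_skip_initial_zeros:
  fixes f :: "nat \<Rightarrow> 'a::comm_monoid_add"
  assumes "\<And>j. j < s \<Longrightarrow> f j = 0" "s \<le> m"
  shows "(\<Sum>j\<le>m. f j) = (\<Sum>i\<le>m - s. f (s + i))"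
proof -
  have "(\<Sum>j\<le>m. f j) = (\<Sum>j\<in>{s..m}. f j)"
    by (rule sum.mono_neutral_right) (use assms in auto)
  also have "\<dots> = (\<Sum>j\<in>{0 + s..(m - s) + s}. f j)" using assms by simp
  also have "\<dots> = (\<Sum>i\<in>{0..m - s}. f (i + s))" by (rule sum.shift_bounds_cl_nat_ivl)
  also have "\<dots> = (\<Sum>i\<le>m - s. f (s + i))" by (simp add: atMost_atLeast0 add.commute)
  finally show ?thesis .
qed

lemma sum_int_interval_reflect: "(\<Sum>k\<in>{- (R::int)..R}. f k) = (\<Sum>k\<in>{- R..R}. f (- k))"
  by (rule sum.reindex_bij_witness[where i="uminus" and j="uminus"]) auto

lemma minus_one_power_int_uminus: "((-1::'a::division_ring) powi (- k)) = (-1) powi k"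
proof -
  have "(-1::'a) powi (- k) = ((-1) powi (-1)) powi k"
    by (metis mult_minus1 power_int_mult)
  then show ?thesis by (simp add: power_int_minus)
qed

lemma infsum_nat_eq_sum_atMost:
  fixes f :: "nat \<Rightarrow> 'a::{comm_monoid_add, t2_space}"
  assumes "\<And>k. N < k \<Longrightarrow> f k = 0"
  shows "(\<Sum>\<^sub>\<infinity>k. f k) = (\<Sum>k\<le>N. f k)"
  by (intro infsumI has_sum_finite_neutralI) (use assms in \<open>auto simp: not_le\<close>)

lemma infsum_int_eq_sum_interval:
  fixes f :: "int \<Rightarrow> 'a::{comm_monoid_add, t2_space}"
  assumes "\<And>k. R < \<bar>k\<bar> \<Longrightarrow> f k = 0"
  shows "(\<Sum>\<^sub>\<infinity>k. f k) = (\<Sum>k\<in>{- R..R}. f k)"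
  by (intro infsumI has_sum_finite_neutralI) (use assms in \<open>auto simp: abs_le_iff\<close>)

section \<open>q-Pochhammer symbols\<close>

lemma qpoch_0 [simp]: "qpoch q 0 = 1"
  by (simp add: qpoch_def)

lemma qpoch_Suc: "qpoch q (Suc n) = qpoch q n * (1 - q ^ Suc n)"
  by (simp add: qpoch_def prod.nat_ivl_Suc')

lemma qpoch_nonzero_if_norm_less_one:
  assumes "norm q < 1" shows "qpoch q n \<noteq> 0"
proof -
  have "norm (q ^ i) < 1" if "i \<ge> 1" for i
    using assms that by (simp add: norm_power power_less_one_iff)
  then show ?thesis by (fastforce simp: qpoch_def)
qed

lemma qpoch_inv_neg: "k < 0 \<Longrightarrow> qpoch_inv q k = 0"
  by (simp add: qpoch_inv_def)

lemma qpoch_inv_of_nat [simp]: "qpoch_inv q (int n) = 1 / qpoch q n"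
  by (simp add: qpoch_inv_def)

lemma qpoch_inv_add [simp]: "qpoch_inv q (int a + int b) = 1 / qpoch q (a + b)"
  by (metis of_nat_add qpoch_inv_of_nat)

lemma qpoch_inv_diff: "qpoch_inv q (int a - int b) = (if b \<le> a then 1 / qpoch q (a - b) else 0)"
proof (cases "b \<le> a")
  case True
  then have "int a - int b = int (a - b)" by simp
  with True show ?thesis by (simp only: qpoch_inv_of_nat if_True)
qed (simp add: qpoch_inv_neg)

section \<open>q-binomial coefficients\<close>

locale qpoch_nonvanishing =
  fixes q :: complex
  assumes q_nonzero: "q \<noteq> 0" and qpoch_nonzero [simp]: "qpoch q n \<noteq> 0"
begin

abbreviation P where "P \<equiv> qpoch q"

lemma one_minus_power_nonzero [simp]: "1 - q ^ Suc n \<noteq> 0"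
  using qpoch_nonzero[of "Suc n"] by (simp add: qpoch_Suc del: power_Suc)

lemma power_Suc_neq_one [simp]: "q ^ Suc n \<noteq> 1"
  using one_minus_power_nonzero[of n] by (simp del: power_Suc)

definition qbinom :: "nat \<Rightarrow> nat \<Rightarrow> complex" where
  "qbinom n k = (if k \<le> n then P n / (P k * P (n - k)) else 0)"

lemma qbinom_0 [simp]: "qbinom n 0 = 1" by (simp add: qbinom_def)
lemma qbinom_self [simp]: "qbinom n n = 1" by (simp add: qbinom_def)
lemma qbinom_eq_0 [simp]: "n < k \<Longrightarrow> qbinom n k = 0" by (simp add: qbinom_def)

lemma qbinom_Suc_Suc_terms:
  assumes "n = k + Suc d"
  shows "qbinom (Suc n) (Suc k)
      = P n * (1 - q ^ Suc k * q ^ Suc d) / (P k * (1 - q ^ Suc k) * (P d * (1 - q ^ Suc d)))"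
    and "qbinom n k = P n / (P k * (P d * (1 - q ^ Suc d)))"
    and "qbinom n (Suc k) = P n / (P k * (1 - q ^ Suc k) * P d)"
proof -
  have "Suc n - Suc k = Suc d" "n - k = Suc d" "n - Suc k = d" "Suc k \<le> n"
    "q ^ Suc n = q ^ Suc k * q ^ Suc d"
    using assms by (simp_all flip: power_add)
  then show "qbinom (Suc n) (Suc k)
      = P n * (1 - q ^ Suc k * q ^ Suc d) / (P k * (1 - q ^ Suc k) * (P d * (1 - q ^ Suc d)))"
    and "qbinom n k = P n / (P k * (P d * (1 - q ^ Suc d)))"
    and "qbinom n (Suc k) = P n / (P k * (1 - q ^ Suc k) * P d)"
    by (simp_all add: qbinom_def qpoch_Suc del: power_Suc)
qed

lemma qbinom_Suc_Suc: "qbinom (Suc n) (Suc k) = qbinom n k + q ^ Suc k * qbinom n (Suc k)"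
proof (cases "k < n")
  case True
  then obtain d where d: "n = k + Suc d" by (metis add_Suc_right less_imp_Suc_add)
  have alg: "X * (1 - a * b) / (Y * (1 - a) * (Z * (1 - b)))
      = X / (Y * (Z * (1 - b))) + a * (X / (Y * (1 - a) * Z))"
    if "Y \<noteq> 0" "Z \<noteq> 0" "1 - a \<noteq> 0" "1 - b \<noteq> 0" for X Y Z a b :: complex
    using that by (simp add: divide_simps) (simp add: algebra_simps)
  show ?thesis
    unfolding qbinom_Suc_Suc_terms[OF d] by (rule alg) (rule qpoch_nonzero one_minus_power_nonzero)+
qed (cases "k = n", simp_all)

lemma qbinom_Suc_Suc': "qbinom (Suc n) (Suc k) = q ^ (n - k) * qbinom n k + qbinom n (Suc k)"
proof (cases "k < n")
  case True
  then obtain d where d: "n = k + Suc d" by (metis add_Suc_right less_imp_Suc_add)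
  have alg: "X * (1 - a * b) / (Y * (1 - a) * (Z * (1 - b)))
      = b * (X / (Y * (Z * (1 - b)))) + X / (Y * (1 - a) * Z)"
    if "Y \<noteq> 0" "Z \<noteq> 0" "1 - a \<noteq> 0" "1 - b \<noteq> 0" for X Y Z a b :: complex
    using that by (simp add: divide_simps) (simp add: algebra_simps)
  have nk: "n - k = Suc d" using d by simp
  show ?thesis
    unfolding qbinom_Suc_Suc_terms[OF d] nk by (rule alg) (rule qpoch_nonzero one_minus_power_nonzero)+
qed (cases "k = n", simp_all)

lemma vandermonde_exponent_shift:
  assumes "i \<le> c"
  shows "q ^ Suc c * (q ^ ((A - Suc i) * (c - i)) * qbinom A (Suc i) * X)
    = q ^ ((A - i) * (c - i)) * q ^ Suc i * qbinom A (Suc i) * X"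
proof (cases "Suc i \<le> A")
  case True
  then obtain a b where "A = Suc i + a" "c = i + b"
    using assms by (metis le_add_diff_inverse)
  then have "Suc c + (A - Suc i) * (c - i) = (A - i) * (c - i) + Suc i"
    by (simp add: algebra_simps)
  then show ?thesis
    by (metis (no_types) mult.assoc power_add)
qed simp

lemma q_vandermonde:
  "(\<Sum>i\<le>C. q ^ ((A - i) * (C - i)) * qbinom A i * qbinom B (C - i)) = qbinom (A + B) C"
proof (induction A arbitrary: C)
  case 0
  then show ?case by (cases C) (simp_all add: sum.atMost_Suc_shift del: sum.atMost_Suc)
next
  case (Suc A)
  show ?case
  proof (cases C)
    case 0
    then show ?thesis by simp
  next
    case (Suc c)
    have "(\<Sum>i\<le>C. q ^ ((Suc A - i) * (C - i)) * qbinom (Suc A) i * qbinom B (C - i))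
        = (q ^ (Suc A * Suc c) * qbinom B (Suc c)
           + (\<Sum>i\<le>c. q ^ ((A - i) * (c - i)) * q ^ Suc i * qbinom A (Suc i) * qbinom B (c - i)))
          + (\<Sum>i\<le>c. q ^ ((A - i) * (c - i)) * qbinom A i * qbinom B (c - i))"
      by (simp add: Suc sum.atMost_Suc_shift qbinom_Suc_Suc sum.distrib ring_distribs mult.assoc
          del: sum.atMost_Suc)
    also have "q ^ (Suc A * Suc c) * qbinom B (Suc c)
          + (\<Sum>i\<le>c. q ^ ((A - i) * (c - i)) * q ^ Suc i * qbinom A (Suc i) * qbinom B (c - i))
        = q ^ Suc c * qbinom (A + B) (Suc c)"
    proof -
      have "qbinom (A + B) (Suc c) = q ^ (A * Suc c) * qbinom B (Suc c)
          + (\<Sum>i\<le>c. q ^ ((A - Suc i) * (c - i)) * qbinom A (Suc i) * qbinom B (c - i))"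
        using Suc.IH[of "Suc c"] by (simp add: sum.atMost_Suc_shift del: sum.atMost_Suc)
      then have "q ^ Suc c * qbinom (A + B) (Suc c) = q ^ Suc c * (q ^ (A * Suc c) * qbinom B (Suc c))
          + (\<Sum>i\<le>c. q ^ Suc c * (q ^ ((A - Suc i) * (c - i)) * qbinom A (Suc i)
              * qbinom B (c - i)))"
        by (simp only: distrib_left sum_distrib_left)
      also have "q ^ Suc c * (q ^ (A * Suc c) * qbinom B (Suc c))
          = q ^ (Suc A * Suc c) * qbinom B (Suc c)"
        by (simp only: mult_Suc power_add mult.assoc)
      also have "(\<Sum>i\<le>c. q ^ Suc c * (q ^ ((A - Suc i) * (c - i)) * qbinom A (Suc i)
              * qbinom B (c - i)))
          = (\<Sum>i\<le>c. q ^ ((A - i) * (c - i)) * q ^ Suc i * qbinom A (Suc i) * qbinom B (c - i))"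
        by (intro sum.cong refl vandermonde_exponent_shift) simp
      finally show ?thesis ..
    qed
    also have "(\<Sum>i\<le>c. q ^ ((A - i) * (c - i)) * qbinom A i * qbinom B (c - i))
        = qbinom (A + B) c"
      by (rule Suc.IH)
    finally show ?thesis
      by (simp add: Suc qbinom_Suc_Suc)
  qed
qed

lemma qpower_Suc_square_shift:
  assumes "i \<le> M"
  shows "q ^ (Suc i * Suc i + a * Suc i) * (q ^ (M - i) * X) / Y
    = q ^ Suc (a + M) * (q ^ (i * i + Suc a * i) * X / Y)"
proof -
  obtain b where "M = i + b"
    using assms by (metis le_add_diff_inverse)
  then have "Suc i * Suc i + a * Suc i + (M - i) = Suc (a + M) + (i * i + Suc a * i)"
    by (simp add: algebra_simps)
  then have "q ^ (Suc i * Suc i + a * Suc i) * q ^ (M - i) = q ^ Suc (a + M) * q ^ (i * i + Suc a * i)"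
    by (simp only: power_add[symmetric])
  then show ?thesis
    by (metis (no_types) mult.assoc times_divide_eq_right)
qed

lemma sum_qbinom_div_qpoch:
  "(\<Sum>i\<le>M. q ^ (i * i + a * i) * qbinom M i / P (a + i)) = 1 / P (a + M)"
proof (induction M arbitrary: a)
  case 0
  then show ?case by simp
next
  case (Suc M)
  have "(\<Sum>i\<le>Suc M. q ^ (i * i + a * i) * qbinom (Suc M) i / P (a + i))
      = (1 / P a + (\<Sum>i\<le>M. q ^ (Suc i * Suc i + a * Suc i) * qbinom M (Suc i) / P (a + Suc i)))
        + (\<Sum>i\<le>M. q ^ (Suc i * Suc i + a * Suc i) * (q ^ (M - i) * qbinom M i) / P (a + Suc i))"
    by (simp add: sum.atMost_Suc_shift qbinom_Suc_Suc' ring_distribs add_divide_distrib sum.distrib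
        del: sum.atMost_Suc)
  also have "1 / P a
        + (\<Sum>i\<le>M. q ^ (Suc i * Suc i + a * Suc i) * qbinom M (Suc i) / P (a + Suc i))
      = (\<Sum>i\<le>Suc M. q ^ (i * i + a * i) * qbinom M i / P (a + i))"
    by (subst sum.atMost_Suc_shift) simp
  also have "\<dots> = 1 / P (a + M)"
    using Suc.IH[of a] by simp
  also have "(\<Sum>i\<le>M. q ^ (Suc i * Suc i + a * Suc i) * (q ^ (M - i) * qbinom M i)
        / P (a + Suc i)) = q ^ Suc (a + M) / P (Suc a + M)"
  proof -
    have "(\<Sum>i\<le>M. q ^ (Suc i * Suc i + a * Suc i) * (q ^ (M - i) * qbinom M i) / P (a + Suc i))
        = q ^ Suc (a + M) * (\<Sum>i\<le>M. q ^ (i * i + Suc a * i) * qbinom M i / P (a + Suc i))"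
      unfolding sum_distrib_left by (intro sum.cong refl qpower_Suc_square_shift) simp
    then show ?thesis using Suc.IH[of "Suc a"] by simp
  qed
  also have "1 / P (a + M) + q ^ Suc (a + M) / P (Suc a + M) = 1 / P (a + Suc M)"
  proof -
    have alg: "1 / X + y / (X * (1 - y)) = 1 / (X * (1 - y))"
      if "X \<noteq> 0" "1 - y \<noteq> 0" for X y :: complex
      using that by (simp add: divide_simps)
    show ?thesis
      unfolding add_Suc add_Suc_right qpoch_Suc
      by (rule alg) (rule qpoch_nonzero one_minus_power_nonzero)+
  qed
  finally show ?case .
qed

lemma q_binomial_theorem:
  "(\<Prod>t<n. 1 - x * q ^ t) = (\<Sum>i\<le>n. (-1) ^ i * q ^ (i choose 2) * qbinom n i * x ^ i)"
proof (induction n)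
  case 0
  then show ?case by (simp add: numeral_2_eq_2)
next
  case (Suc n)
  define R where "R = (\<Sum>i\<le>n. (-1) ^ i * q ^ (i choose 2) * qbinom n i * x ^ i)"
  have choose2_0: "0 choose 2 = 0"
    by (simp add: numeral_2_eq_2)
  have shift: "(-1) ^ Suc i * q ^ (Suc i choose 2) * (q ^ (n - i) * qbinom n i) * x ^ Suc i
      = - (x * q ^ n) * ((-1) ^ i * q ^ (i choose 2) * qbinom n i * x ^ i)" if "i \<le> n" for i
  proof -
    have "q ^ (Suc i choose 2) * q ^ (n - i) = q ^ n * q ^ (i choose 2)"
      using that by (simp add: Suc_choose_two add.commute flip: power_add)
    then show ?thesis by (simp add: algebra_simps)
  qed
  have "(\<Sum>i\<le>Suc n. (-1) ^ i * q ^ (i choose 2) * qbinom (Suc n) i * x ^ i)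
      = (1 + (\<Sum>i\<le>n. (-1) ^ Suc i * q ^ (Suc i choose 2) * qbinom n (Suc i) * x ^ Suc i))
        + (\<Sum>i\<le>n. (-1) ^ Suc i * q ^ (Suc i choose 2) * (q ^ (n - i) * qbinom n i) * x ^ Suc i)"
    by (simp add: sum.atMost_Suc_shift qbinom_Suc_Suc' ring_distribs sum.distrib choose2_0
        del: sum.atMost_Suc power_Suc)
  also have "1 + (\<Sum>i\<le>n. (-1) ^ Suc i * q ^ (Suc i choose 2) * qbinom n (Suc i) * x ^ Suc i)
      = (\<Sum>i\<le>Suc n. (-1) ^ i * q ^ (i choose 2) * qbinom n i * x ^ i)"
    by (subst sum.atMost_Suc_shift) (simp add: choose2_0)
  also have "\<dots> = R"
    by (simp add: R_def)
  also have "(\<Sum>i\<le>n. (-1) ^ Suc i * q ^ (Suc i choose 2) * (q ^ (n - i) * qbinom n i)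
      * x ^ Suc i) = - (x * q ^ n) * R"
    unfolding R_def sum_distrib_left by (intro sum.cong refl shift) simp
  finally show ?case
    unfolding prod.lessThan_Suc Suc.IH R_def[symmetric] by (simp add: algebra_simps del: sum.atMost_Suc)
qed

lemma q_binomial_alternating_sum_eq_0:
  assumes "j > 0"
  shows "(\<Sum>i\<le>2 * j. (-1) ^ i * q ^ (i choose 2) * qbinom (2 * j) i * (inverse q ^ j) ^ i) = 0"
proof -
  have "1 - inverse q ^ j * q ^ j = 0"
    using q_nonzero by (simp add: field_simps)
  then have "(\<Prod>t<2 * j. 1 - inverse q ^ j * q ^ t) = 0"
    using assms by (intro prod_zero) (auto intro!: bexI[of _ j])
  then show ?thesis
    by (simp add: q_binomial_theorem)
qed

section \<open>The Bailey kernel and its pentagonal sums\<close>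

definition bailey_kernel :: "nat \<Rightarrow> int \<Rightarrow> complex" where
  "bailey_kernel n k = qpoch_inv q (int n - k) * qpoch_inv q (int n + k)"

lemma bailey_kernel_uminus: "bailey_kernel n (- k) = bailey_kernel n k"
  by (simp add: bailey_kernel_def mult.commute)

lemma bailey_kernel_of_nat:
  "bailey_kernel n (int j) = (if j \<le> n then 1 / (P (n - j) * P (n + j)) else 0)"
  unfolding bailey_kernel_def qpoch_inv_diff qpoch_inv_add by simp

lemma bailey_kernel_abs: "bailey_kernel n k = bailey_kernel n (int (nat \<bar>k\<bar>))"
  by (cases "k \<ge> 0") (simp_all add: bailey_kernel_uminus[of n k, symmetric])

lemma bailey_kernel_eq_0: "n < nat \<bar>k\<bar> \<Longrightarrow> bailey_kernel n k = 0"
  using bailey_kernel_abs[of n k] bailey_kernel_of_nat[of n "nat \<bar>k\<bar>"] by simp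

definition linearization_coeff :: "nat \<Rightarrow> nat \<Rightarrow> nat \<Rightarrow> complex" where
  "linearization_coeff n N j =
    (if j \<le> n \<and> j \<le> N then q ^ ((n - j) * (N - j)) / (P (n - j) * P (N - j)) else 0)"

lemma linearization_coeff_mult_bailey_kernel:
  assumes "i \<le> a" "i \<le> c"
  shows "linearization_coeff (t + a) (t + c) (t + i) * bailey_kernel (t + i) (int t)
       = q ^ ((a - i) * (c - i)) * qbinom a i * qbinom (c + 2 * t) (c - i) / (P a * P (c + 2 * t))"
proof -
  have e: "c + 2 * t - (c - i) = 2 * t + i" "t + i + t = 2 * t + i"
    using assms by simp_all
  show ?thesis
    using assms by (simp add: e linearization_coeff_def bailey_kernel_of_nat qbinom_def)
qed

lemma bailey_kernel_mult_of_nat: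
  "P (n + N) * (bailey_kernel n (int t) * bailey_kernel N (int t))
    = (\<Sum>j\<le>min n N. linearization_coeff n N j * bailey_kernel j (int t))"
proof (cases "t \<le> min n N")
  case False
  then show ?thesis
    by (force simp: bailey_kernel_of_nat intro!: sum.neutral[symmetric])
next
  case True
  then obtain a c where n: "n = t + a" and N: "N = t + c"
    by (metis le_add_diff_inverse min.bounded_iff)
  define g where "g i = q ^ ((a - i) * (c - i)) * qbinom a i * qbinom (c + 2 * t) (c - i)" for i
  have "(\<Sum>j\<le>min n N. linearization_coeff n N j * bailey_kernel j (int t))
      = (\<Sum>i\<le>min a c. linearization_coeff n N (t + i) * bailey_kernel (t + i) (int t))"
    by (subst sum_atMost_skip_initial_zeros[where s = t])
      (auto simp: n N bailey_kernel_of_nat simp flip: min_add_distrib_right)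
  also have "\<dots> = (\<Sum>i\<le>min a c. g i) / (P a * P (c + 2 * t))"
    by (simp add: n N g_def linearization_coeff_mult_bailey_kernel sum_divide_distrib)
  also have "(\<Sum>i\<le>min a c. g i) = (\<Sum>i\<le>c. g i)"
    by (rule sum_atMost_eq_if_vanishing[where c = "min a c"]) (auto simp: g_def)
  also have "\<dots> = qbinom (a + (c + 2 * t)) c"
    unfolding g_def by (rule q_vandermonde)
  finally show ?thesis
    by (simp add: n N qbinom_def bailey_kernel_of_nat algebra_simps mult_2_right)
qed

lemma bailey_kernel_mult:
  "P (n + N) * (bailey_kernel n k * bailey_kernel N k)
    = (\<Sum>j\<le>min n N. linearization_coeff n N j * bailey_kernel j k)"
  using bailey_kernel_mult_of_nat[of n N "nat \<bar>k\<bar>"] by (simp only: bailey_kernel_abs[symmetric])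

lemma sum_bailey_kernel_mult:
  "P (n + N) * (\<Sum>k\<in>S. a k * (bailey_kernel n k * bailey_kernel N k))
    = (\<Sum>j\<le>min n N. linearization_coeff n N j * (\<Sum>k\<in>S. a k * bailey_kernel j k))"
proof -
  have "P (n + N) * (\<Sum>k\<in>S. a k * (bailey_kernel n k * bailey_kernel N k))
      = (\<Sum>k\<in>S. a k * (P (n + N) * (bailey_kernel n k * bailey_kernel N k)))"
    by (simp add: sum_distrib_left mult.left_commute)
  also have "\<dots> = (\<Sum>k\<in>S. a k * (\<Sum>j\<le>min n N. linearization_coeff n N j * bailey_kernel j k))"
    by (simp only: bailey_kernel_mult)
  also have "\<dots> = (\<Sum>k\<in>S. \<Sum>j\<le>min n N. linearization_coeff n N j * (a k * bailey_kernel j k))"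
    by (simp add: sum_distrib_left mult.left_commute)
  also have "\<dots> = (\<Sum>j\<le>min n N. linearization_coeff n N j * (\<Sum>k\<in>S. a k * bailey_kernel j k))"
    by (subst sum.swap) (simp add: sum_distrib_left)
  finally show ?thesis .
qed

lemma sum_symmetric_interval:
  "(\<Sum>k\<in>{- int j..int j}. f k) = (\<Sum>i\<le>2 * j. f (int i - int j))"
  by (rule sum.reindex_bij_witness[where i="\<lambda>i. int i - int j" and j="\<lambda>k. nat (k + int j)"])
    auto

lemma sum_bailey_kernel_restrict:
  assumes "j \<le> R"
  shows "(\<Sum>k\<in>{- int R..int R}. f k * bailey_kernel j k)
    = (\<Sum>k\<in>{- int j..int j}. f k * bailey_kernel j k)"
proof (rule sum.mono_neutral_right)
  show "\<forall>k\<in>{- int R..int R} - {- int j..int j}. f k * bailey_kernel j k = 0"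
  proof
    fix k assume "k \<in> {- int R..int R} - {- int j..int j}"
    then have "j < nat \<bar>k\<bar>" by auto
    then show "f k * bailey_kernel j k = 0" by (simp add: bailey_kernel_eq_0)
  qed
qed (use assms in auto)

definition triangular_weight :: "int \<Rightarrow> complex" where
  "triangular_weight k = (-1) powi k * q powi ((k * k - k) div 2)"

lemma triangular_weight_shift:
  "triangular_weight (int i - int j)
    = (-1) powi (- int j) * q ^ (Suc j choose 2) * ((-1) ^ i * q ^ (i choose 2) * (inverse q ^ j) ^ i)"
proof -
  have "(int i - int j) * (int i - int j) - (int i - int j)
      = 2 * (int (i choose 2) + int (Suc j choose 2) - int (i * j))"
    using two_times_choose_two_int[of i] two_times_choose_two_int[of "Suc j"]
    by (simp add: algebra_simps)
  then have "q powi (((int i - int j) * (int i - int j) - (int i - int j)) div 2)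
      = q ^ (i choose 2) * q ^ (Suc j choose 2) * inverse (q ^ (i * j))"
    using q_nonzero by (simp add: power_int_add power_int_diff power_int_minus divide_inverse
        flip: of_nat_mult power_int_of_nat)
  moreover have "(-1::complex) powi (int i - int j) = (-1) ^ i * (-1) powi (- int j)"
    by (simp add: power_int_diff power_int_minus divide_inverse)
  ultimately show ?thesis
    by (simp add: triangular_weight_def power_inverse ac_simps flip: power_mult)
qed

lemma bailey_kernel_shift:
  assumes "i \<le> 2 * j"
  shows "bailey_kernel j (int i - int j) = qbinom (2 * j) i / P (2 * j)"
proof -
  have "int j - (int i - int j) = int (2 * j - i)" "int j + (int i - int j) = int i"
    using assms by simp_all
  then show ?thesis
    using assms by (simp only: bailey_kernel_def qpoch_inv_of_nat) (simp add: qbinom_def)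
qed

lemma sum_triangular_weight_bailey_kernel:
  assumes "j \<le> R"
  shows "(\<Sum>k\<in>{- int R..int R}. triangular_weight k * bailey_kernel j k)
    = (if j = 0 then 1 else 0)"
proof (cases "j = 0")
  case True
  have "(\<Sum>k\<in>{- int R..int R}. triangular_weight k * bailey_kernel 0 k)
      = (\<Sum>k\<in>{- int 0..int 0}. triangular_weight k * bailey_kernel 0 k)"
    by (rule sum_bailey_kernel_restrict) simp
  with True show ?thesis
    by (simp add: triangular_weight_def bailey_kernel_def qpoch_inv_def)
next
  case False
  define c where "c = (-1) powi (- int j) * q ^ (Suc j choose 2) / P (2 * j)"
  have "(\<Sum>k\<in>{- int R..int R}. triangular_weight k * bailey_kernel j k)
      = (\<Sum>i\<le>2 * j. triangular_weight (int i - int j) * bailey_kernel j (int i - int j))"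
    by (subst sum_bailey_kernel_restrict[OF assms]) (rule sum_symmetric_interval)
  also have "\<dots> = c * (\<Sum>i\<le>2 * j.
      (-1) ^ i * q ^ (i choose 2) * qbinom (2 * j) i * (inverse q ^ j) ^ i)"
    by (simp add: sum_distrib_left triangular_weight_shift bailey_kernel_shift c_def ac_simps)
  also have "\<dots> = 0"
    using False by (simp add: q_binomial_alternating_sum_eq_0)
  finally show ?thesis
    using False by simp
qed

lemma qpower_square_bailey_kernel_of_nat:
  "q ^ (t * t) * bailey_kernel h (int t)
    = (\<Sum>j\<le>h. q ^ (j * j) / P (h - j) * bailey_kernel j (int t))"
proof (cases "t \<le> h")
  case False
  then show ?thesis
    by (force simp: bailey_kernel_of_nat intro!: sum.neutral[symmetric])
next
  case True
  then obtain M where h: "h = t + M"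
    using le_Suc_ex by blast
  have "q ^ ((t + i) * (t + i)) / P (M - i) * bailey_kernel (t + i) (int t)
      = q ^ (t * t) / P M * (q ^ (i * i + 2 * t * i) * qbinom M i / P (2 * t + i))" if "i \<le> M" for i
  proof -
    have e: "(t + i) * (t + i) = t * t + (i * i + 2 * t * i)" "t + i + t = 2 * t + i"
      by (simp_all add: algebra_simps)
    with that show ?thesis
      by (simp add: e bailey_kernel_of_nat qbinom_def power_add)
  qed
  then have "(\<Sum>j\<le>h. q ^ (j * j) / P (h - j) * bailey_kernel j (int t))
      = q ^ (t * t) / P M * (\<Sum>i\<le>M. q ^ (i * i + 2 * t * i) * qbinom M i / P (2 * t + i))"
    by (subst sum_atMost_skip_initial_zeros[where s = t])
      (auto simp: h bailey_kernel_of_nat sum_distrib_left)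
  also have "\<dots> = q ^ (t * t) * bailey_kernel h (int t)"
    unfolding sum_qbinom_div_qpoch by (simp add: h bailey_kernel_of_nat mult_2 add_ac)
  finally show ?thesis ..
qed

lemma qpower_square_bailey_kernel:
  "q powi (k * k) * bailey_kernel h k = (\<Sum>j\<le>h. q ^ (j * j) / P (h - j) * bailey_kernel j k)"
proof -
  have "k * k = int (nat \<bar>k\<bar> * nat \<bar>k\<bar>)"
    by (simp add: abs_mult_self_eq)
  then have "q powi (k * k) = q ^ (nat \<bar>k\<bar> * nat \<bar>k\<bar>)"
    by (simp only: power_int_of_nat)
  then show ?thesis
    using qpower_square_bailey_kernel_of_nat[of "nat \<bar>k\<bar>" h] by (simp only: bailey_kernel_abs[symmetric])
qed

definition pentagonal_weight :: "int \<Rightarrow> complex" where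
  "pentagonal_weight k = (-1) powi k * q powi ((3 * k^2 - k) div 2)"

lemma pentagonal_weight_eq_triangular_weight: "pentagonal_weight k = triangular_weight k * q powi (k * k)"
proof -
  have "3 * k^2 - k = (k * k - k) + 2 * (k * k)"
    by (simp add: power2_eq_square algebra_simps)
  then have "(3 * k^2 - k) div 2 = (k * k - k) div 2 + k * k"
    by simp
  then show ?thesis
    using q_nonzero by (simp add: pentagonal_weight_def triangular_weight_def power_int_add mult.assoc)
qed

lemma pentagonal_sum_kernel:
  assumes "h \<le> R"
  shows "(\<Sum>k\<in>{- int R..int R}. pentagonal_weight k * bailey_kernel h k) = 1 / P h"
proof -
  have "(\<Sum>k\<in>{- int R..int R}. pentagonal_weight k * bailey_kernel h k)
      = (\<Sum>k\<in>{- int R..int R}.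
          \<Sum>j\<le>h. q ^ (j * j) / P (h - j) * (triangular_weight k * bailey_kernel j k))"
    by (simp add: pentagonal_weight_eq_triangular_weight mult.assoc qpower_square_bailey_kernel sum_distrib_left
        mult.left_commute)
  also have "\<dots> = (\<Sum>j\<le>h. q ^ (j * j) / P (h - j)
      * (\<Sum>k\<in>{- int R..int R}. triangular_weight k * bailey_kernel j k))"
    by (subst sum.swap) (simp add: sum_distrib_left)
  also have "\<dots> = 1 / P h"
    using assms by (simp add: sum_triangular_weight_bailey_kernel sum.atMost_shift)
  finally show ?thesis .
qed

lemma linearization_coeff_commute: "linearization_coeff n N j = linearization_coeff N n j"
  by (simp add: linearization_coeff_def mult.commute)

lemma sum_linearization_coeff_div_qpoch_le:
  assumes "i \<le> j"
  shows "(\<Sum>h\<le>min i j. linearization_coeff i j h / P h) = 1 / (P i * P j)"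
proof -
  obtain a where j: "j = i + a"
    using assms le_Suc_ex by blast
  have "linearization_coeff i j (i - t) / P (i - t) = q ^ (t * t + a * t) * qbinom i t / P (a + t) / P i"
    if "t \<le> i" for t
  proof -
    have e: "i - (i - t) = t" "j - (i - t) = a + t"
      using that by (simp_all add: j)
    then have "(i - (i - t)) * (j - (i - t)) = t * t + a * t"
      by (simp add: algebra_simps)
    with that show ?thesis
      by (simp add: e linearization_coeff_def qbinom_def j)
  qed
  then have "(\<Sum>h\<le>min i j. linearization_coeff i j h / P h)
      = (\<Sum>t\<le>i. q ^ (t * t + a * t) * qbinom i t / P (a + t)) / P i"
    using assms by (subst sum_atMost_rev) (simp add: sum_divide_distrib)
  also have "\<dots> = 1 / (P i * P j)"
    unfolding sum_qbinom_div_qpoch by (simp add: j add.commute)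
  finally show ?thesis .
qed

lemma sum_linearization_coeff_div_qpoch:
  "(\<Sum>h\<le>min i j. linearization_coeff i j h / P h) = 1 / (P i * P j)"
proof (cases "i \<le> j")
  case False
  then have "(\<Sum>h\<le>min j i. linearization_coeff j i h / P h) = 1 / (P j * P i)"
    by (intro sum_linearization_coeff_div_qpoch_le) simp
  then show ?thesis
    by (simp add: linearization_coeff_commute min.commute mult.commute)
qed (rule sum_linearization_coeff_div_qpoch_le)

lemma pentagonal_sum_kernel_pair:
  assumes "i \<le> R" "j \<le> R"
  shows "(\<Sum>k\<in>{- int R..int R}. pentagonal_weight k * (bailey_kernel i k * bailey_kernel j k))
    = 1 / (P i * P j * P (i + j))"
proof -
  have "P (i + j) * (\<Sum>k\<in>{- int R..int R}. pentagonal_weight k * (bailey_kernel i k * bailey_kernel j k))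
      = (\<Sum>h\<le>min i j. linearization_coeff i j h
          * (\<Sum>k\<in>{- int R..int R}. pentagonal_weight k * bailey_kernel h k))"
    by (rule sum_bailey_kernel_mult)
  also have "\<dots> = (\<Sum>h\<le>min i j. linearization_coeff i j h / P h)"
    using assms by (intro sum.cong refl) (simp add: pentagonal_sum_kernel)
  also have "\<dots> = 1 / (P i * P j)"
    by (rule sum_linearization_coeff_div_qpoch)
  finally show ?thesis
    by (simp add: field_simps)
qed

lemma pentagonal_sum_kernel_triple:
  assumes "l \<le> R" "v \<le> R" "j \<le> R"
  shows "(\<Sum>k\<in>{- int R..int R}.
      pentagonal_weight k * (bailey_kernel l k * bailey_kernel v k * bailey_kernel j k))
    = P (l + v + j) / (P l * P v * P j * P (l + v) * P (l + j) * P (v + j))"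
proof -
  define g where "g i = q ^ ((l - i) * (v - i)) * qbinom l i * qbinom (v + j) (v - i)" for i
  have "linearization_coeff l v i * (1 / (P i * P j * P (i + j))) = g i / (P l * P (v + j) * P j)"
    if "i \<le> l" "i \<le> v" for i
  proof -
    have e: "v + j - (v - i) = i + j"
      using that by simp
    with that show ?thesis
      by (simp add: e g_def linearization_coeff_def qbinom_def add.commute)
  qed
  then have "P (l + v) * (\<Sum>k\<in>{- int R..int R}.
        pentagonal_weight k * (bailey_kernel l k * bailey_kernel v k * bailey_kernel j k))
      = (\<Sum>i\<le>min l v. g i) / (P l * P (v + j) * P j)"
    using sum_bailey_kernel_mult[of l v "\<lambda>k. pentagonal_weight k * bailey_kernel j k" "{- int R..int R}"]
      pentagonal_sum_kernel_pair[of _ R j] assms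
    by (simp add: ac_simps sum_divide_distrib)
  also have "(\<Sum>i\<le>min l v. g i) = (\<Sum>i\<le>v. g i)"
    by (rule sum_atMost_eq_if_vanishing[where c = "min l v"]) (auto simp: g_def)
  also have "\<dots> = qbinom (l + (v + j)) v"
    unfolding g_def by (rule q_vandermonde)
  finally show ?thesis
    by (simp add: qbinom_def field_simps add_ac)
qed

section \<open>The left-hand side as a pentagonal sum\<close>

definition lhs_summand :: "nat \<Rightarrow> nat \<Rightarrow> nat \<Rightarrow> nat \<Rightarrow> nat \<Rightarrow> complex" where
  "lhs_summand l m n v k = (if k \<le> l \<and> k \<le> m \<and> k \<le> n
     then q ^ (k * k + v * k) * P (l + m + n - k) / (P k * P (l - k) * P (m - k) * P (n - k) * P (v + k))
     else 0)"

definition dual_summand :: "nat \<Rightarrow> nat \<Rightarrow> nat \<Rightarrow> nat \<Rightarrow> nat \<Rightarrow> complex" where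
  "dual_summand l m n v j = (if j \<le> m \<and> j \<le> n
     then q ^ ((m - j) * (n - j)) * P (l + v + j) / (P (m - j) * P (n - j) * P j * P (l + j) * P (v + j))
     else 0)"

(* Expanding the q-binomial coefficient [l+m+n-k, n-k] hidden in lhs_summand by q-Vandermonde,
   with l+m+n-k = (m-k) + (l+n), produces the j-sum of double_summand. *)
definition double_summand :: "nat \<Rightarrow> nat \<Rightarrow> nat \<Rightarrow> nat \<Rightarrow> nat \<Rightarrow> nat \<Rightarrow> complex" where
  "double_summand l m n v j k = (if k \<le> j \<and> j \<le> m \<and> j \<le> n \<and> k \<le> l
     then q ^ (k * (v + k) + (m - j) * (n - j))
       / (P (l + j) * P (m - j) * P (n - j) * P k * P (j - k) * P (l - k) * P (v + k))
     else 0)"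

lemma sum_double_summand_over_k:
  assumes "j \<le> n"
  shows "(\<Sum>k\<le>l. double_summand l m n v j k) = dual_summand l m n v j / (P l * P (l + v))"
proof (cases "j \<le> m")
  case False
  then show ?thesis
    by (simp add: double_summand_def dual_summand_def)
next
  case True
  define X where "X = q ^ ((m - j) * (n - j)) / (P (l + j) * P (m - j) * P (n - j))"
  define g where "g i = q ^ ((l + v - i) * (l - i)) * qbinom (l + v) i * qbinom j (l - i)" for i
  have "double_summand l m n v j (l - i) = X * g i / (P (l + v) * P j)" if "i \<le> l" for i
  proof (cases "l - i \<le> j")
    case True
    have e: "l - (l - i) = i" "v + (l - i) = l + v - i"
      using that by simp_all
    show ?thesis
      using True that \<open>j \<le> m\<close> assms
      by (simp add: e double_summand_def X_def g_def qbinom_def power_add mult.commute[of "l - i"])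
        (simp add: divide_simps ac_simps)
  qed (simp add: double_summand_def g_def)
  then have "(\<Sum>k\<le>l. double_summand l m n v j k) = X * (\<Sum>i\<le>l. g i) / (P (l + v) * P j)"
    by (subst sum_atMost_rev) (simp add: sum_distrib_left sum_divide_distrib)
  also have "(\<Sum>i\<le>l. g i) = qbinom (l + v + j) l"
    unfolding g_def by (rule q_vandermonde)
  finally show ?thesis
    using True assms by (simp add: X_def dual_summand_def qbinom_def field_simps)
qed

lemma sum_double_summand_over_j:
  assumes "k \<le> l"
  shows "(\<Sum>j\<le>n. double_summand l m n v j k) = lhs_summand l m n v k / (P (l + m) * P (l + n))"
proof (cases "k \<le> m \<and> k \<le> n")
  case False
  then show ?thesis
    by (auto simp: double_summand_def lhs_summand_def intro!: sum.neutral)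
next
  case True
  then obtain a c where m: "m = k + a" and n: "n = k + c"
    by (metis le_add_diff_inverse)
  define Y where "Y = q ^ (k * (v + k)) / (P k * P (l - k) * P (v + k))"
  define g where "g i = q ^ ((a - i) * (c - i)) * qbinom a i * qbinom (l + n) (c - i)" for i
  have "double_summand l m n v (k + i) k = Y * g i / (P a * P (l + n))" if "i \<le> c" for i
  proof (cases "i \<le> a")
    case True
    have e: "l + n - (c - i) = l + (k + i)"
      using that by (simp add: n)
    show ?thesis
      using True that assms
      by (simp add: e m n double_summand_def Y_def g_def qbinom_def power_add field_simps)
  qed (simp add: m double_summand_def g_def)
  then have "(\<Sum>j\<le>n. double_summand l m n v j k) = Y * (\<Sum>i\<le>c. g i) / (P a * P (l + n))"
    by (subst sum_atMost_skip_initial_zeros[where s = k])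
      (auto simp: n double_summand_def sum_distrib_left sum_divide_distrib)
  also have "(\<Sum>i\<le>c. g i) = qbinom (a + (l + n)) c"
    unfolding g_def by (rule q_vandermonde)
  finally show ?thesis
    using assms by (simp add: m n Y_def lhs_summand_def qbinom_def power_add field_simps)
qed

lemma sum_lhs_summand_transform:
  "(\<Sum>k\<le>l. lhs_summand l m n v k)
    = P (l + m) * P (l + n) / (P l * P (l + v)) * (\<Sum>j\<le>n. dual_summand l m n v j)"
proof -
  have "(\<Sum>k\<le>l. lhs_summand l m n v k)
      = P (l + m) * P (l + n) * (\<Sum>k\<le>l. \<Sum>j\<le>n. double_summand l m n v j k)"
    by (simp add: sum_distrib_left sum_double_summand_over_j)
  also have "\<dots> = P (l + m) * P (l + n) * (\<Sum>j\<le>n. \<Sum>k\<le>l. double_summand l m n v j k)"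
    by (subst sum.swap) (rule refl)
  also have "\<dots> = P (l + m) * P (l + n) / (P l * P (l + v)) * (\<Sum>j\<le>n. dual_summand l m n v j)"
    by (simp add: sum_double_summand_over_k flip: sum_divide_distrib)
  finally show ?thesis .
qed

lemma sum_lhs_summand_eq_pentagonal:
  assumes "l \<le> R" "m \<le> R" "n \<le> R" "v \<le> R"
  shows "(\<Sum>k\<le>l. lhs_summand l m n v k) = P (l + m) * P (l + n) * P (m + n) * P v *
    (\<Sum>k\<in>{- int R..int R}.
      pentagonal_weight k * (bailey_kernel l k * bailey_kernel m k * bailey_kernel n k * bailey_kernel v k))"
proof -
  define T where "T j = (\<Sum>k\<in>{- int R..int R}.
    pentagonal_weight k * (bailey_kernel l k * bailey_kernel v k * bailey_kernel j k))" for j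
  have "dual_summand l m n v j = P l * P v * P (l + v) * (linearization_coeff m n j * T j)"
    if "j \<le> n" for j
  proof (cases "j \<le> m")
    case True
    have "T j = P (l + v + j) / (P l * P v * P j * P (l + v) * P (l + j) * P (v + j))"
      unfolding T_def using that assms by (intro pentagonal_sum_kernel_triple) auto
    with True that show ?thesis
      by (simp add: dual_summand_def linearization_coeff_def field_simps)
  qed (simp add: dual_summand_def linearization_coeff_def)
  then have "(\<Sum>j\<le>n. dual_summand l m n v j)
      = P l * P v * P (l + v) * (\<Sum>j\<le>n. linearization_coeff m n j * T j)"
    by (simp add: sum_distrib_left)
  also have "(\<Sum>j\<le>n. linearization_coeff m n j * T j)
      = (\<Sum>j\<le>min m n. linearization_coeff m n j * T j)"
    by (rule sum_atMost_eq_if_vanishing[where c = "min m n"]) (auto simp: linearization_coeff_def)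
  also have "(\<Sum>j\<le>min m n. linearization_coeff m n j * T j)
      = P (m + n) * (\<Sum>k\<in>{- int R..int R}. pentagonal_weight k * bailey_kernel l k * bailey_kernel v k
          * (bailey_kernel m k * bailey_kernel n k))"
    unfolding T_def
    using sum_bailey_kernel_mult[of m n "\<lambda>k. pentagonal_weight k * bailey_kernel l k * bailey_kernel v k"]
    by (simp add: ac_simps)
  finally show ?thesis
    by (simp add: sum_lhs_summand_transform field_simps ac_simps)
qed

lemma qpoch_inv_pred: "qpoch_inv q (x - 1) = (1 - q powi x) * qpoch_inv q x"
proof (cases "x \<ge> 1")
  case True
  define n where "n = nat (x - 1)"
  have x: "x = int (Suc n)" "x - 1 = int n"
    using True by (simp_all add: n_def)
  have "1 / P n = (1 - q ^ Suc n) * (1 / P (Suc n))"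
    by (simp add: qpoch_Suc del: power_Suc)
  then show ?thesis
    unfolding x(2) by (simp only: x(1) qpoch_inv_of_nat power_int_of_nat)
next
  case False
  then show ?thesis
    by (cases "x = 0") (simp_all add: qpoch_inv_def)
qed

lemma bailey_kernel_pred:
  "bailey_kernel v k
    = (1 - q ^ Suc v * q powi (- k)) * (1 - q ^ Suc v * q powi k) * bailey_kernel (Suc v) k"
proof -
  have "qpoch_inv q (int v + j) = (1 - q ^ Suc v * q powi j) * qpoch_inv q (int (Suc v) + j)" for j
  proof -
    have "q powi (int (Suc v) + j) = q ^ Suc v * q powi j"
      using q_nonzero by (simp add: power_int_add)
    moreover have "int (Suc v) + j - 1 = int v + j"
      by simp
    ultimately show ?thesis
      using qpoch_inv_pred[of "int (Suc v) + j"] by simp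
  qed
  from this[of "- k"] this[of k] show ?thesis
    by (simp add: bailey_kernel_def)
qed

lemma pentagonal_weight_uminus: "pentagonal_weight (- k) = (-1) powi k * q powi ((3 * k^2 + k) div 2)"
  by (simp add: pentagonal_weight_def minus_one_power_int_uminus)

lemma pentagonal_weight_mult_qpowi: "pentagonal_weight k * q powi k = pentagonal_weight (- k)"
proof -
  have "(3 * k\<^sup>2 + k) div 2 = (3 * k\<^sup>2 - k + k * 2) div 2"
    by (simp add: algebra_simps)
  also have "\<dots> = k + (3 * k\<^sup>2 - k) div 2"
    by (rule div_mult_self1) simp
  finally have "q powi ((3 * k\<^sup>2 - k) div 2) * q powi k = q powi ((3 * k\<^sup>2 + k) div 2)"
    using q_nonzero by (simp add: add.commute flip: power_int_add)
  then show ?thesis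
    unfolding pentagonal_weight_uminus by (simp add: pentagonal_weight_def mult.assoc)
qed

lemma sum_pentagonal_weight_mult_qpowi:
  assumes "\<And>k. g (- k) = g k"
  shows "(\<Sum>k\<in>{- R..R}. pentagonal_weight k * q powi k * g k)
    = (\<Sum>k\<in>{- R..R}. pentagonal_weight k * g k)"
  by (subst sum_int_interval_reflect) (simp add: pentagonal_weight_mult_qpowi assms)

lemma lhs_summand_eq:
  "q ^ (k\<^sup>2 + v * k) * qpoch q (nat (int l + int m + int n - int k))
     * qpoch_inv q (int k) * qpoch_inv q (int l - int k) * qpoch_inv q (int m - int k)
     * qpoch_inv q (int n - int k) * qpoch_inv q (int v + int k)
   = lhs_summand l m n v k"
proof (cases "k \<le> l \<and> k \<le> m \<and> k \<le> n")
  case True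
  then have "nat (int l + int m + int n - int k) = l + m + n - k" by simp
  with True show ?thesis
    by (simp add: lhs_summand_def qpoch_inv_diff qpoch_inv_add power2_eq_square)
qed (auto simp: lhs_summand_def qpoch_inv_diff)

lemma lhs_summand_Suc_eq:
  "q ^ (k\<^sup>2 + v * k) * qpoch q (nat (int l + int m + int n - int k))
     * qpoch_inv q (int k) * qpoch_inv q (int l - int k) * qpoch_inv q (int m - int k)
     * qpoch_inv q (int n - int k) * qpoch_inv q (int (Suc v) + int k)
   = lhs_summand l m n v k + q ^ Suc v * lhs_summand l m n (Suc v) k"
proof -
  define D where "D = qpoch q (nat (int l + int m + int n - int k))
     * qpoch_inv q (int k) * qpoch_inv q (int l - int k) * qpoch_inv q (int m - int k)
     * qpoch_inv q (int n - int k)"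
  have recip: "1 / P (Suc N) = 1 / P N + q ^ Suc N / P (Suc N)" for N
    by (simp add: qpoch_Suc divide_simps del: power_Suc)
  have "qpoch_inv q (int (Suc v) + int k)
      = qpoch_inv q (int v + int k) + q ^ Suc v * q ^ k * qpoch_inv q (int (Suc v) + int k)"
    unfolding qpoch_inv_add add_Suc times_divide_eq_right mult_1_right power_add[symmetric]
    by (rule recip)
  then have "q ^ (k\<^sup>2 + v * k) * D * qpoch_inv q (int (Suc v) + int k)
      = q ^ (k\<^sup>2 + v * k) * D * (qpoch_inv q (int v + int k)
          + q ^ Suc v * q ^ k * qpoch_inv q (int (Suc v) + int k))"
    by (rule arg_cong)
  also have "\<dots> = q ^ (k\<^sup>2 + v * k) * D * qpoch_inv q (int v + int k)
        + q ^ Suc v * (q ^ (k\<^sup>2 + Suc v * k) * D * qpoch_inv q (int (Suc v) + int k))"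
    by (simp add: algebra_simps power_add)
  finally show ?thesis
    unfolding lhs_summand_eq[symmetric] by (simp only: D_def mult.assoc)
qed

lemma infsum_lhs_summand:
  "(\<Sum>\<^sub>\<infinity>k. q ^ (k\<^sup>2 + v * k) * qpoch q (nat (int l + int m + int n - int k))
      * qpoch_inv q (int k) * qpoch_inv q (int l - int k) * qpoch_inv q (int m - int k)
      * qpoch_inv q (int n - int k) * qpoch_inv q (int v + int k))
   = (\<Sum>k\<le>l. lhs_summand l m n v k)"
  unfolding lhs_summand_eq by (rule infsum_nat_eq_sum_atMost) (simp add: lhs_summand_def)

lemma infsum_lhs_summand_Suc:
  "(\<Sum>\<^sub>\<infinity>k. q ^ (k\<^sup>2 + v * k) * qpoch q (nat (int l + int m + int n - int k))
      * qpoch_inv q (int k) * qpoch_inv q (int l - int k) * qpoch_inv q (int m - int k)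
      * qpoch_inv q (int n - int k) * qpoch_inv q (int (Suc v) + int k))
   = (\<Sum>k\<le>l. lhs_summand l m n v k) + q ^ Suc v * (\<Sum>k\<le>l. lhs_summand l m n (Suc v) k)"
  unfolding lhs_summand_Suc_eq
  by (subst infsum_nat_eq_sum_atMost[where N = l])
    (simp add: lhs_summand_def, simp add: sum.distrib sum_distrib_left)

lemma infsum_rhs_summand:
  assumes "l \<le> R"
  shows "(\<Sum>\<^sub>\<infinity>k. w k * qpoch_inv q (int l - k) * qpoch_inv q (int m - k)
      * qpoch_inv q (int n - k) * qpoch_inv q (int u - k) * qpoch_inv q (int l + k) * qpoch_inv q (int m + k)
      * qpoch_inv q (int n + k) * qpoch_inv q (int u + k - 1))
    = (\<Sum>k\<in>{- int R..int R}. w k * (1 - q ^ u * q powi k)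
      * (bailey_kernel l k * bailey_kernel m k * bailey_kernel n k * bailey_kernel u k))"
proof -
  have "qpoch_inv q (int u + k - 1) = (1 - q ^ u * q powi k) * qpoch_inv q (int u + k)" for k
    using qpoch_inv_pred[of "int u + k"] q_nonzero by (simp add: power_int_add)
  then have "w k * qpoch_inv q (int l - k) * qpoch_inv q (int m - k) * qpoch_inv q (int n - k)
      * qpoch_inv q (int u - k) * qpoch_inv q (int l + k) * qpoch_inv q (int m + k)
      * qpoch_inv q (int n + k) * qpoch_inv q (int u + k - 1)
    = w k * (1 - q ^ u * q powi k)
      * (bailey_kernel l k * bailey_kernel m k * bailey_kernel n k * bailey_kernel u k)" for k
    by (simp only:) (simp add: bailey_kernel_def ac_simps)
  then show ?thesis
    using assms by (simp only:, intro infsum_int_eq_sum_interval) (simp add: bailey_kernel_eq_0)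
qed

lemma sum_pentagonal_weight_bailey_kernel_pred:
  assumes "\<And>k. g (- k) = g k"
  shows "(\<Sum>k\<in>{- R..R}. pentagonal_weight k * (g k * bailey_kernel v k))
      + q ^ Suc v * (1 - q ^ Suc v)
        * (\<Sum>k\<in>{- R..R}. pentagonal_weight k * (g k * bailey_kernel (Suc v) k))
    = (\<Sum>k\<in>{- R..R}.
        pentagonal_weight k * (1 - q ^ Suc v * q powi (- k)) * (g k * bailey_kernel (Suc v) k))"
proof -
  define h where "h k = g k * bailey_kernel (Suc v) k" for k
  define c where "c = q ^ Suc v"
  have "q powi (- k) * q powi k = 1" for k
    using q_nonzero by (simp add: power_int_minus)
  then have "pentagonal_weight k * (g k * bailey_kernel v k)
      = pentagonal_weight k * (1 - c * q powi (- k)) * h k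
        - c * (pentagonal_weight k * q powi k * h k) + c * c * (pentagonal_weight k * h k)" for k
    by (simp add: bailey_kernel_pred[of v k] h_def c_def algebra_simps)
  then have "(\<Sum>k\<in>{- R..R}. pentagonal_weight k * (g k * bailey_kernel v k))
      = (\<Sum>k\<in>{- R..R}. pentagonal_weight k * (1 - c * q powi (- k)) * h k)
        - c * (\<Sum>k\<in>{- R..R}. pentagonal_weight k * q powi k * h k)
        + c * c * (\<Sum>k\<in>{- R..R}. pentagonal_weight k * h k)"
    by (simp only: sum.distrib sum_subtractf sum_distrib_left)
  moreover have "(\<Sum>k\<in>{- R..R}. pentagonal_weight k * q powi k * h k)
      = (\<Sum>k\<in>{- R..R}. pentagonal_weight k * h k)"
    by (rule sum_pentagonal_weight_mult_qpowi) (simp add: h_def assms bailey_kernel_uminus)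
  ultimately show ?thesis
    unfolding h_def[symmetric] c_def[symmetric] by (simp add: algebra_simps)
qed

lemma first_pentagonal_identity:
  assumes "u \<ge> 1"
  shows "(\<Sum>\<^sub>\<infinity>k::nat. q ^ (k^2 + u*k) * qpoch q (nat (int l + int m + int n - int k))
       * qpoch_inv q (int k) * qpoch_inv q (int l - int k) * qpoch_inv q (int m - int k)
       * qpoch_inv q (int n - int k) * qpoch_inv q (int u + int k))
       = (\<Sum>\<^sub>\<infinity>k::int. (-1) powi k * q powi ((3*k^2 - k) div 2)
         * qpoch q (l+m) * qpoch q (l+n) * qpoch q (m+n) * qpoch q (u-1)
         * qpoch_inv q (int l - k) * qpoch_inv q (int m - k) * qpoch_inv q (int n - k)
         * qpoch_inv q (int u - k) * qpoch_inv q (int l + k) * qpoch_inv q (int m + k)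
         * qpoch_inv q (int n + k) * qpoch_inv q (int u + k - 1))"
proof -
  define R where "R = l + m + n + u"
  define C where "C = P (l + m) * P (l + n) * P (m + n)"
  define g where "g k = bailey_kernel l k * bailey_kernel m k * bailey_kernel n k" for k
  have "(\<Sum>\<^sub>\<infinity>k::nat. q ^ (k^2 + u*k) * qpoch q (nat (int l + int m + int n - int k))
        * qpoch_inv q (int k) * qpoch_inv q (int l - int k) * qpoch_inv q (int m - int k)
        * qpoch_inv q (int n - int k) * qpoch_inv q (int u + int k))
      = C * P u * (\<Sum>k\<in>{- int R..int R}. pentagonal_weight k * (g k * bailey_kernel u k))"
    unfolding infsum_lhs_summand C_def g_def by (rule sum_lhs_summand_eq_pentagonal) (simp_all add: R_def)
  also have "\<dots> = C * P (u - 1) * (\<Sum>k\<in>{- int R..int R}.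
      pentagonal_weight k * (1 - q ^ u * q powi k) * (g k * bailey_kernel u k))"
  proof -
    have twist: "(\<Sum>k\<in>{- int R..int R}. pentagonal_weight k * q powi k * (g k * bailey_kernel u k))
        = (\<Sum>k\<in>{- int R..int R}. pentagonal_weight k * (g k * bailey_kernel u k))"
      by (rule sum_pentagonal_weight_mult_qpowi) (simp add: g_def bailey_kernel_uminus)
    have split: "(\<Sum>k\<in>{- int R..int R}.
          pentagonal_weight k * (1 - q ^ u * q powi k) * (g k * bailey_kernel u k))
        = (\<Sum>k\<in>{- int R..int R}. pentagonal_weight k * (g k * bailey_kernel u k))
          - q ^ u * (\<Sum>k\<in>{- int R..int R}. pentagonal_weight k * q powi k * (g k * bailey_kernel u k))"
      by (simp add: sum_subtractf sum_distrib_left algebra_simps)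
    have "P u = P (u - 1) * (1 - q ^ u)"
      using qpoch_Suc[of q "u - 1"] assms by simp
    then show ?thesis
      by (simp only: split twist) (simp add: algebra_simps)
  qed
  also have "\<dots> = (\<Sum>\<^sub>\<infinity>k::int. (-1) powi k * q powi ((3*k^2 - k) div 2)
          * qpoch q (l+m) * qpoch q (l+n) * qpoch q (m+n) * qpoch q (u-1)
          * qpoch_inv q (int l - k) * qpoch_inv q (int m - k) * qpoch_inv q (int n - k)
          * qpoch_inv q (int u - k) * qpoch_inv q (int l + k) * qpoch_inv q (int m + k)
          * qpoch_inv q (int n + k) * qpoch_inv q (int u + k - 1))"
    by (subst infsum_rhs_summand[where R = R]) (simp_all add: R_def C_def g_def pentagonal_weight_def
        sum_distrib_left ac_simps)
  finally show ?thesis .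
qed

lemma second_pentagonal_identity:
  assumes "u \<ge> 1"
  shows "(\<Sum>\<^sub>\<infinity>k::nat. q ^ (k^2 + (u-1)*k) * qpoch q (nat (int l + int m + int n - int k))
       * qpoch_inv q (int k) * qpoch_inv q (int l - int k) * qpoch_inv q (int m - int k)
       * qpoch_inv q (int n - int k) * qpoch_inv q (int u + int k))
       = (\<Sum>\<^sub>\<infinity>k::int. (-1) powi k * q powi ((3*k^2 + k) div 2)
         * qpoch q (l+m) * qpoch q (m+n) * qpoch q (l+n) * qpoch q (u-1)
         * qpoch_inv q (int l - k) * qpoch_inv q (int m - k) * qpoch_inv q (int n - k)
         * qpoch_inv q (int u - k) * qpoch_inv q (int l + k) * qpoch_inv q (int m + k)
         * qpoch_inv q (int n + k) * qpoch_inv q (int u + k - 1))"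
proof -
  obtain v where u: "u = Suc v"
    using assms by (cases u) auto
  define R where "R = l + m + n + u"
  define C where "C = P (l + m) * P (l + n) * P (m + n)"
  define g where "g k = bailey_kernel l k * bailey_kernel m k * bailey_kernel n k" for k
  have g_even: "g (- k) = g k" for k
    by (simp add: g_def bailey_kernel_uminus)
  have "(\<Sum>\<^sub>\<infinity>k::nat. q ^ (k^2 + (u-1)*k) * qpoch q (nat (int l + int m + int n - int k))
        * qpoch_inv q (int k) * qpoch_inv q (int l - int k) * qpoch_inv q (int m - int k)
        * qpoch_inv q (int n - int k) * qpoch_inv q (int u + int k))
      = C * P v * ((\<Sum>k\<in>{- int R..int R}. pentagonal_weight k * (g k * bailey_kernel v k))
        + q ^ u * (1 - q ^ u) * (\<Sum>k\<in>{- int R..int R}. pentagonal_weight k * (g k * bailey_kernel u k)))"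
  proof -
    have Tv: "(\<Sum>k\<le>l. lhs_summand l m n v k)
        = C * P v * (\<Sum>k\<in>{- int R..int R}. pentagonal_weight k * (g k * bailey_kernel v k))"
      and TSuc: "(\<Sum>k\<le>l. lhs_summand l m n (Suc v) k)
        = C * P (Suc v) * (\<Sum>k\<in>{- int R..int R}. pentagonal_weight k * (g k * bailey_kernel (Suc v) k))"
      unfolding C_def g_def by (rule sum_lhs_summand_eq_pentagonal; simp add: R_def u)+
    show ?thesis
      unfolding u diff_Suc_1 infsum_lhs_summand_Suc Tv TSuc qpoch_Suc
      by (simp add: algebra_simps del: power_Suc)
  qed
  also have "\<dots> = C * P v * (\<Sum>k\<in>{- int R..int R}.
      pentagonal_weight k * (1 - q ^ u * q powi (- k)) * (g k * bailey_kernel u k))"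
    unfolding u by (subst sum_pentagonal_weight_bailey_kernel_pred) (simp_all add: g_even)
  also have "\<dots> = C * P v * (\<Sum>k\<in>{- int R..int R}.
      pentagonal_weight (- k) * (1 - q ^ u * q powi k) * (g k * bailey_kernel u k))"
    by (subst sum_int_interval_reflect) (simp add: g_even bailey_kernel_uminus)
  also have "\<dots> = (\<Sum>\<^sub>\<infinity>k::int. (-1) powi k * q powi ((3*k^2 + k) div 2)
          * qpoch q (l+m) * qpoch q (m+n) * qpoch q (l+n) * qpoch q (u-1)
          * qpoch_inv q (int l - k) * qpoch_inv q (int m - k) * qpoch_inv q (int n - k)
          * qpoch_inv q (int u - k) * qpoch_inv q (int l + k) * qpoch_inv q (int m + k)
          * qpoch_inv q (int n + k) * qpoch_inv q (int u + k - 1))"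
    by (subst infsum_rhs_summand[where R = R]) (simp_all add: R_def C_def g_def u pentagonal_weight_uminus
        sum_distrib_left ac_simps)
  finally show ?thesis .
qed

end

theorem corollary5p6:
  fixes q :: complex and l m n u :: nat
  assumes "0 < norm q" and "norm q < 1" and "u \<ge> 1"
  shows "(\<Sum>\<^sub>\<infinity>k::nat. q ^ (k^2 + u*k) * qpoch q (nat (int l + int m + int n - int k))
            * qpoch_inv q (int k) * qpoch_inv q (int l - int k) * qpoch_inv q (int m - int k)
            * qpoch_inv q (int n - int k) * qpoch_inv q (int u + int k))
       = (\<Sum>\<^sub>\<infinity>k::int. (-1) powi k * q powi ((3*k^2 - k) div 2)
            * qpoch q (l+m) * qpoch q (l+n) * qpoch q (m+n) * qpoch q (u-1)
            * qpoch_inv q (int l - k) * qpoch_inv q (int m - k) * qpoch_inv q (int n - k)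
            * qpoch_inv q (int u - k) * qpoch_inv q (int l + k) * qpoch_inv q (int m + k)
            * qpoch_inv q (int n + k) * qpoch_inv q (int u + k - 1))
     \<and> (\<Sum>\<^sub>\<infinity>k::nat. q ^ (k^2 + (u-1)*k) * qpoch q (nat (int l + int m + int n - int k))
            * qpoch_inv q (int k) * qpoch_inv q (int l - int k) * qpoch_inv q (int m - int k)
            * qpoch_inv q (int n - int k) * qpoch_inv q (int u + int k))
       = (\<Sum>\<^sub>\<infinity>k::int. (-1) powi k * q powi ((3*k^2 + k) div 2)
            * qpoch q (l+m) * qpoch q (m+n) * qpoch q (l+n) * qpoch q (u-1)
            * qpoch_inv q (int l - k) * qpoch_inv q (int m - k) * qpoch_inv q (int n - k)
            * qpoch_inv q (int u - k) * qpoch_inv q (int l + k) * qpoch_inv q (int m + k)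
            * qpoch_inv q (int n + k) * qpoch_inv q (int u + k - 1))"
proof -
  interpret qpoch_nonvanishing q
    using assms(1,2) qpoch_nonzero_if_norm_less_one by unfold_locales auto
  show ?thesis
    using assms(3) by (intro conjI first_pentagonal_identity second_pentagonal_identity)
qed

end
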